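(* Let $R$ be a commutative ring with nonzero identity and $\delta$ an expansion of ideals of $R$. Then $\sqrt{0}$ is a $\delta$-$n$-ideal of $R$ if and only if every zero-divisor of the quotient ring $R/\sqrt{0}$ is $\delta_q$-nilpotent.
   Context: An expansion of ideals of a ring $R$ is a map $\delta$ from the set of ideals of $R$ to itself such that $I\subseteq\delta(I)$ for every ideal $I$, and $\delta(I)\subseteq\delta(J)$ whenever $I\subseteq J$. $\sqrt{0}$ denotes the nilradical of $R$. Given an expansion $\delta$, a proper ideal $I$ of $R$ is a $\delta$-$n$-ideal if whenever $a,b\in R$ with $ab\in I$ and $a\notin\sqrt{0}$, then $b\in\delta(I)$. The expansion $\delta_q$ of ideals of $R/\sqrt{0}$ is defined by $\delta_q(J/\sqrt{0})=\delta(J)/\sqrt{0}$ for ideals $J\supseteq\sqrt{0}$ of $R$. An element $x$ of $R/\sqrt{0}$ is $\delta_q$-nilpotent if $x\in\delta_q(0_{R/\sqrt{0}})$. A zero-divisor $\bar a$ of $R/\sqrt{0}$ is an element with $\bar a\bar b=0$ for some nonzero $\bar b\in R/\sqrt{0}$. *)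

theory Defs
  imports "HOL-Algebra.Algebra"
begin

definition expansion :: "('a, 'b) ring_scheme \<Rightarrow> ('a set \<Rightarrow> 'a set) \<Rightarrow> bool" where
  "expansion R \<delta> \<longleftrightarrow>
     (\<forall>I. ideal I R \<longrightarrow> ideal (\<delta> I) R \<and> I \<subseteq> \<delta> I) \<and>
     (\<forall>I J. ideal I R \<longrightarrow> ideal J R \<longrightarrow> I \<subseteq> J \<longrightarrow> \<delta> I \<subseteq> \<delta> J)"

definition nilradical :: "('a, 'b) ring_scheme \<Rightarrow> 'a set" where
  "nilradical R = {a \<in> carrier R. \<exists>n::nat. a [^]\<^bsub>R\<^esub> n = \<zero>\<^bsub>R\<^esub>}"

definition delta_n_ideal :: "('a, 'b) ring_scheme \<Rightarrow> ('a set \<Rightarrow> 'a set) \<Rightarrow> 'a set \<Rightarrow> bool" where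
  "delta_n_ideal R \<delta> I \<longleftrightarrow> ideal I R \<and> I \<noteq> carrier R \<and>
     (\<forall>a \<in> carrier R. \<forall>b \<in> carrier R.
        a \<otimes>\<^bsub>R\<^esub> b \<in> I \<longrightarrow> a \<notin> nilradical R \<longrightarrow> b \<in> \<delta> I)"

(* For an ideal J of R containing N, the ideal J/N of R Quot N *)
definition quot_ideal :: "('a, 'b) ring_scheme \<Rightarrow> 'a set \<Rightarrow> 'a set \<Rightarrow> 'a set set" where
  "quot_ideal R N J = (\<lambda>x. N +>\<^bsub>R\<^esub> x) ` J"

(* delta_q(J/sqrt0) = delta(J)/sqrt0; every ideal J' of R/sqrt0 is J/sqrt0 with J = \<Union>J' *)
definition delta_q :: "('a, 'b) ring_scheme \<Rightarrow> ('a set \<Rightarrow> 'a set) \<Rightarrow> 'a set set \<Rightarrow> 'a set set" where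
  "delta_q R \<delta> J' = quot_ideal R (nilradical R) (\<delta> (\<Union> J'))"

definition zero_divisor :: "('c, 'd) ring_scheme \<Rightarrow> 'c \<Rightarrow> bool" where
  "zero_divisor S x \<longleftrightarrow> x \<in> carrier S \<and>
     (\<exists>y \<in> carrier S. y \<noteq> \<zero>\<^bsub>S\<^esub> \<and> x \<otimes>\<^bsub>S\<^esub> y = \<zero>\<^bsub>S\<^esub>)"

definition delta_q_nilpotent :: "('a, 'b) ring_scheme \<Rightarrow> ('a set \<Rightarrow> 'a set) \<Rightarrow> 'a set \<Rightarrow> bool" where
  "delta_q_nilpotent R \<delta> x \<longleftrightarrow>
     x \<in> delta_q R \<delta> {\<zero>\<^bsub>R Quot (nilradical R)\<^esub>}"

end

theory Submission
  imports Defs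
begin

(* Write N for the nilradical. A zero-divisor of R/N is a class N + a with a b \<in> N for some
   b \<notin> N, and since N \<subseteq> \<delta>(N) such a class lies in \<delta>(N)/N exactly when a \<in> \<delta>(N). Hence both
   sides of the equivalence say that a b \<in> N and b \<notin> N force a \<in> \<delta>(N), up to swapping a and b
   by commutativity. The only substantial ingredient is that N is an ideal, i.e. that a sum of
   nilpotents is nilpotent: if x^m = 0 and y^n = 0 then every monomial x^i y^j with i + j = m + n
   vanishes, and (x + y)^(m+n) lies in every ideal containing all these monomials. *)

lemma (in cring) colon_ideal:
  assumes "ideal J R" "c \<in> carrier R"
  shows "ideal {w \<in> carrier R. w \<otimes> c \<in> J} R"
proof -
  interpret J: ideal J R by fact
  show ?thesis
  proof (rule idealI)
    show "subgroup {w \<in> carrier R. w \<otimes> c \<in> J} (add_monoid R)"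
    proof (rule add.subgroupI)
      fix a b assume "a \<in> {w \<in> carrier R. w \<otimes> c \<in> J}" "b \<in> {w \<in> carrier R. w \<otimes> c \<in> J}"
      then show "\<ominus> a \<in> {w \<in> carrier R. w \<otimes> c \<in> J}" "a \<oplus> b \<in> {w \<in> carrier R. w \<otimes> c \<in> J}"
        using assms by (simp_all add: l_minus l_distr J.a_inv_closed J.a_closed)
    qed (use assms in auto)
  next
    fix a x assume a: "a \<in> {w \<in> carrier R. w \<otimes> c \<in> J}" and x: "x \<in> carrier R"
    then show "x \<otimes> a \<in> {w \<in> carrier R. w \<otimes> c \<in> J}"
      using assms by (simp add: m_assoc J.I_l_closed)
    have "a \<otimes> x \<otimes> c = x \<otimes> (a \<otimes> c)" using a x assms by (simp add: m_assoc m_lcomm)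
    then show "a \<otimes> x \<in> {w \<in> carrier R. w \<otimes> c \<in> J}"
      using a x by (simp add: J.I_l_closed)
  qed (rule ring_axioms)
qed

lemma (in cring) add_pow_mem_ideal:
  assumes x: "x \<in> carrier R" and y: "y \<in> carrier R" and "ideal J R"
    and monomials: "\<And>i j. i + j = k \<Longrightarrow> x [^] i \<otimes> y [^] j \<in> J"
  shows "(x \<oplus> y) [^] (k::nat) \<in> J"
  using \<open>ideal J R\<close> monomials
proof (induction k arbitrary: J)
  case 0
  then show ?case using "0.prems"(2)[of 0 0] by simp
next
  case (Suc k)
  interpret J: ideal J R by fact
  \<comment> \<open>apply the induction hypothesis to the colon ideals (J : x) and (J : y)\<close>
  have "(x \<oplus> y) [^] k \<otimes> x \<in> J"
  proof -
    have "x [^] i \<otimes> y [^] j \<otimes> x \<in> J" if "i + j = k" for i j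
    proof -
      have "x [^] i \<otimes> y [^] j \<otimes> x = x [^] Suc i \<otimes> y [^] j"
        using x y by (simp add: m_assoc m_comm m_lcomm)
      then show ?thesis using Suc.prems(2)[of "Suc i" j] that by simp
    qed
    then show ?thesis
      using Suc.IH[OF colon_ideal[OF \<open>ideal J R\<close> x]] x y by auto
  qed
  moreover have "(x \<oplus> y) [^] k \<otimes> y \<in> J"
  proof -
    have "x [^] i \<otimes> y [^] j \<otimes> y \<in> J" if "i + j = k" for i j
    proof -
      have "x [^] i \<otimes> y [^] j \<otimes> y = x [^] i \<otimes> y [^] Suc j"
        using x y by (simp add: m_assoc)
      then show ?thesis using Suc.prems(2)[of i "Suc j"] that by simp
    qed
    then show ?thesis
      using Suc.IH[OF colon_ideal[OF \<open>ideal J R\<close> y]] x y by auto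
  qed
  moreover have "(x \<oplus> y) [^] Suc k = (x \<oplus> y) [^] k \<otimes> x \<oplus> (x \<oplus> y) [^] k \<otimes> y"
    using x y by (simp add: r_distr)
  ultimately show ?case by (simp add: J.a_closed)
qed

lemma (in cring) nilpotent_add:
  assumes x: "x \<in> carrier R" and y: "y \<in> carrier R"
    and "x [^] (m::nat) = \<zero>" "y [^] (n::nat) = \<zero>"
  shows "(x \<oplus> y) [^] (m + n) = \<zero>"
proof -
  have "x [^] i \<otimes> y [^] j = \<zero>" if "i + j = m + n" for i j :: nat
  proof -
    from that consider "m \<le> i" | "n \<le> j" by linarith
    then show ?thesis
    proof cases
      case 1
      then have "x [^] i = x [^] m \<otimes> x [^] (i - m)" using x by (simp add: nat_pow_mult)
      then show ?thesis using assms by simp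
    next
      case 2
      then have "y [^] j = y [^] n \<otimes> y [^] (j - n)" using y by (simp add: nat_pow_mult)
      then show ?thesis using assms by simp
    qed
  qed
  then show ?thesis using add_pow_mem_ideal[OF x y zeroideal] by blast
qed

lemma (in cring) nilpotent_mult:
  assumes "x \<in> carrier R" "r \<in> carrier R" "x [^] (n::nat) = \<zero>"
  shows "(r \<otimes> x) [^] n = \<zero>"
  using assms by (simp add: pow_mult_distrib m_comm)

lemma (in cring) nilradical_ideal: "ideal (nilradical R) R"
proof (rule idealI)
  show "subgroup (nilradical R) (add_monoid R)"
  proof (rule add.subgroupI)
    show "nilradical R \<noteq> {}"
      unfolding nilradical_def by (auto intro!: exI[of _ \<zero>] exI[of _ "1::nat"])
    fix a b assume "a \<in> nilradical R" "b \<in> nilradical R"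
    then obtain m n where a: "a \<in> carrier R" "a [^] (m::nat) = \<zero>"
      and b: "b \<in> carrier R" "b [^] (n::nat) = \<zero>"
      unfolding nilradical_def by auto
    have "(\<ominus> \<one> \<otimes> a) [^] m = \<zero>" using a by (simp add: nilpotent_mult)
    then show "\<ominus> a \<in> nilradical R"
      unfolding nilradical_def using a by (auto simp: l_minus)
    show "a \<oplus> b \<in> nilradical R"
      unfolding nilradical_def using nilpotent_add[OF a(1) b(1) a(2) b(2)] a b by blast
  qed (auto simp: nilradical_def)
next
  fix a x assume "a \<in> nilradical R" "x \<in> carrier R"
  then obtain n where a: "a \<in> carrier R" "a [^] (n::nat) = \<zero>"
    unfolding nilradical_def by auto
  then have "(x \<otimes> a) [^] n = \<zero>" using \<open>x \<in> carrier R\<close> by (simp add: nilpotent_mult)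
  then show "x \<otimes> a \<in> nilradical R" "a \<otimes> x \<in> nilradical R"
    unfolding nilradical_def using a \<open>x \<in> carrier R\<close> by (auto simp: m_comm)
qed (rule ring_axioms)

lemma (in ring) one_notin_nilradical:
  assumes "\<one> \<noteq> \<zero>"
  shows "\<one> \<notin> nilradical R"
  using assms by (simp add: nilradical_def)

lemma (in ideal) rcos_eq_self_iff:
  assumes "a \<in> carrier R"
  shows "I +> a = I \<longleftrightarrow> a \<in> I"
  using assms rcos_const_imp_mem a_rcos_zero[OF is_ideal] by blast

lemma (in ideal) zero_divisor_Quot_iff:
  "zero_divisor (R Quot I) x \<longleftrightarrow>
     (\<exists>a \<in> carrier R. \<exists>b \<in> carrier R. x = I +> a \<and> b \<notin> I \<and> a \<otimes> b \<in> I)"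
proof -
  have carrier_Quot: "carrier (R Quot I) = (+>) I ` carrier R"
    by (auto simp: FactRing_simps)
  have mult_Quot: "(I +> a) \<otimes>\<^bsub>R Quot I\<^esub> (I +> b) = I +> (a \<otimes> b)"
    if "a \<in> carrier R" "b \<in> carrier R" for a b
    using rcoset_mult_add[OF that] by (simp add: FactRing_def)
  have zero_Quot: "\<zero>\<^bsub>R Quot I\<^esub> = I"
    by (simp add: FactRing_def)
  show ?thesis
    unfolding zero_divisor_def carrier_Quot zero_Quot
    by (auto simp: mult_Quot rcos_eq_self_iff) blast
qed

lemma (in ideal) rcos_mem_image_iff:
  assumes "ideal D R" "I \<subseteq> D" "b \<in> carrier R"
  shows "I +> b \<in> (+>) I ` D \<longleftrightarrow> b \<in> D"
proof
  assume "I +> b \<in> (+>) I ` D"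
  then obtain c where c: "c \<in> D" "I +> b = I +> c" by auto
  interpret D: ideal D R by fact
  have "c \<in> carrier R" using c by (simp add: D.Icarr)
  then have "b \<ominus> c \<in> D"
    using c \<open>I \<subseteq> D\<close> quotient_eq_iff_same_a_r_cos[OF is_ideal \<open>b \<in> carrier R\<close>] by blast
  moreover have "b = (b \<ominus> c) \<oplus> c" using \<open>b \<in> carrier R\<close> \<open>c \<in> carrier R\<close> by algebra
  ultimately show "b \<in> D" using c D.a_closed by metis
qed auto

lemma delta_q_nilpotent_iff:
  "delta_q_nilpotent R \<delta> x \<longleftrightarrow> x \<in> (+>\<^bsub>R\<^esub>) (nilradical R) ` \<delta> (nilradical R)"
  by (simp add: delta_q_nilpotent_def delta_q_def quot_ideal_def FactRing_def)

theorem proposition2p15: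
  fixes R (structure) and \<delta> :: "'a set \<Rightarrow> 'a set"
  assumes "cring R" and "\<one> \<noteq> \<zero>" and "expansion R \<delta>"
  shows "delta_n_ideal R \<delta> (nilradical R) \<longleftrightarrow>
    (\<forall>x. zero_divisor (R Quot (nilradical R)) x \<longrightarrow> delta_q_nilpotent R \<delta> x)"
proof -
  interpret cring R by fact
  define N where "N = nilradical R"
  interpret N: ideal N R unfolding N_def by (rule nilradical_ideal)
  have \<delta>N: "ideal (\<delta> N) R" "N \<subseteq> \<delta> N"
    using \<open>expansion R \<delta>\<close> N.is_ideal by (auto simp: expansion_def)
  have "N \<noteq> carrier R" using one_notin_nilradical[OF \<open>\<one> \<noteq> \<zero>\<close>] N_def by blast
  then have "delta_n_ideal R \<delta> N \<longleftrightarrow>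
      (\<forall>a \<in> carrier R. \<forall>b \<in> carrier R. a \<otimes> b \<in> N \<longrightarrow> a \<notin> N \<longrightarrow> b \<in> \<delta> N)"
    by (simp add: delta_n_ideal_def N.is_ideal flip: N_def)
  also have "\<dots> \<longleftrightarrow>
      (\<forall>a \<in> carrier R. \<forall>b \<in> carrier R. b \<notin> N \<longrightarrow> a \<otimes> b \<in> N \<longrightarrow> a \<in> \<delta> N)"
    by (metis m_comm)
  also have "\<dots> \<longleftrightarrow> (\<forall>x. zero_divisor (R Quot N) x \<longrightarrow> delta_q_nilpotent R \<delta> x)"
    unfolding N.zero_divisor_Quot_iff delta_q_nilpotent_iff N_def[symmetric]
    using N.rcos_mem_image_iff[OF \<delta>N] by blast
  finally show ?thesis unfolding N_def .
qed

end
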